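(* Consider $N$ agents in $\mathbb{R}^n$ with dynamics $\dot p_i=\sum_{k=1}^n u_{i,k}\,b_{i,k}$, $i=1,\ldots,N$, under the control law \[ u_{i,k}=\sqrt{\omega_{i,k}}\cos(\omega_{i,k}t+\varphi_{i,k})\,h_1(\psi_i(p))+\sqrt{\omega_{i,k}}\sin(\omega_{i,k}t+\varphi_{i,k})\,h_2(\psi_i(p)). \] For every initial condition $(t_0,p_0)\in\mathbb{R}\times\mathbb{R}^{nN}$, the closed-loop system has a unique solution defined on all of $\mathbb{R}$.
   Context: $G=(V,E)$ is an undirected graph with $V=\{1,\ldots,N\}$ and nonempty edge set $E$ of two-element subsets (edges written $ij$); $d_{ij}\geq0$ for $ij\in E$. For each $i$, $b_{i,1},\ldots,b_{i,n}$ is an orthonormal basis of $\mathbb{R}^n$. $\psi_i(p)=\frac14\sum_{j:\,ij\in E}(\|p_j-p_i\|^2-d_{ij}^2)^2$ for $p=(p_1,\ldots,p_N)\in\mathbb{R}^{nN}$. The $\omega_{i,k}$ are $nN$ pairwise distinct positive reals and $\varphi_{i,k}\in\mathbb{R}$. The functions $h_1,h_2:\mathbb{R}\to\mathbb{R}$ satisfy, for $\nu=1,2$: (i) $h_\nu(y)=0$ for $y\leq 0$; (ii) $h_\nu$ is bounded and of class $C^2$ on $(0,\infty)$; (iii) $h_\nu(y)/y$ remains bounded as $y\downarrow 0$; (iv) $h_\nu'(y)$ remains bounded as $y\downarrow0$; (v) $h_\nu''(y)\,y$ remains bounded as $y\downarrow 0$; (vi) there exist $r',c'>0$ with $h_2'(y)h_1(y)-h_1'(y)h_2(y)\leq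 -c'y$ for all $y\in(0,r']$. *)

theory Defs
  imports "HOL-Analysis.Analysis"
begin

text \<open>Agents are indexed by a finite type 'v (V = {1..N}), positions live in real^'n.
  A configuration p in R^{nN} is an element of (real^'n)^'v, with p $ i the position of agent i.\<close>

definition psi :: "'v::finite set set \<Rightarrow> ('v set \<Rightarrow> real) \<Rightarrow> 'v \<Rightarrow> (real^'n)^'v \<Rightarrow> real" where
  "psi E d i p = (1/4) * (\<Sum>j\<in>{j. {i, j} \<in> E}. (norm (p $ j - p $ i) ^ 2 - (d {i, j}) ^ 2) ^ 2)"

definition ctrl ::
  "'v::finite set set \<Rightarrow> ('v set \<Rightarrow> real) \<Rightarrow> ('v \<Rightarrow> 'n \<Rightarrow> real) \<Rightarrow> ('v \<Rightarrow> 'n \<Rightarrow> real)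
   \<Rightarrow> (real \<Rightarrow> real) \<Rightarrow> (real \<Rightarrow> real) \<Rightarrow> 'v \<Rightarrow> 'n \<Rightarrow> real \<Rightarrow> (real^'n)^'v \<Rightarrow> real" where
  "ctrl E d \<omega> \<phi> h1 h2 i k t p =
     sqrt (\<omega> i k) * cos (\<omega> i k * t + \<phi> i k) * h1 (psi E d i p)
   + sqrt (\<omega> i k) * sin (\<omega> i k * t + \<phi> i k) * h2 (psi E d i p)"

definition closed_loop ::
  "'v::finite set set \<Rightarrow> ('v set \<Rightarrow> real) \<Rightarrow> ('v \<Rightarrow> 'n::finite \<Rightarrow> real^'n) \<Rightarrow> ('v \<Rightarrow> 'n \<Rightarrow> real)
   \<Rightarrow> ('v \<Rightarrow> 'n \<Rightarrow> real) \<Rightarrow> (real \<Rightarrow> real) \<Rightarrow> (real \<Rightarrow> real) \<Rightarrow> real \<Rightarrow> (real^'n)^'v \<Rightarrow> (real^'n)^'v" where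
  "closed_loop E d b \<omega> \<phi> h1 h2 t p =
     (\<chi> i. \<Sum>k\<in>UNIV. ctrl E d \<omega> \<phi> h1 h2 i k t p *\<^sub>R b i k)"

definition admissible_h :: "(real \<Rightarrow> real) \<Rightarrow> (real \<Rightarrow> real) \<Rightarrow> (real \<Rightarrow> real) \<Rightarrow> bool" where
  "admissible_h h h' h'' \<longleftrightarrow>
     (\<forall>y\<le>0. h y = 0) \<and>
     (\<exists>M. \<forall>y>0. \<bar>h y\<bar> \<le> M) \<and>
     (\<forall>y>0. (h has_real_derivative h' y) (at y) \<and> (h' has_real_derivative h'' y) (at y)) \<and>
     continuous_on {0<..} h'' \<and>
     (\<exists>C. eventually (\<lambda>y. \<bar>h y / y\<bar> \<le> C) (at_right 0)) \<and>
     (\<exists>C. eventually (\<lambda>y. \<bar>h' y\<bar> \<le> C) (at_right 0)) \<and>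
     (\<exists>C. eventually (\<lambda>y. \<bar>h'' y * y\<bar> \<le> C) (at_right 0))"

end

(*
  A vector field that is bounded and Lipschitz in the state on every ball, uniformly in time,
  has a unique global flow. Uniqueness: the squared distance w of two solutions satisfies
  |w'| <= 2 L w, so by Gronwall it vanishes at one end of an interval iff at the other.
  Existence on [a, b]: boundedness keeps every Picard iterate in one fixed ball around the
  initial value, so a single Lipschitz constant L applies, and the n-th iterate of the Picard
  operator has Lipschitz constant (L (b - a))^n / n!, hence some iterate is a contraction.
  These local solutions agree on overlaps and glue to a solution on the whole line.
  The closed loop is such a field: each h is bounded, vanishes on (-inf, 0] and has bounded
  derivative near 0, hence is Lipschitz on compacts; psi_i is a polynomial in p; and time
  enters only through the bounded factors sqrt(omega) cos and sqrt(omega) sin.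
*)
theory Submission
  imports Defs
begin

section \<open>Well-posedness for bounded, locally Lipschitz vector fields\<close>

lemma gronwall_endpoint_zero_iff:
  fixes w w' :: "real \<Rightarrow> real"
  assumes "a \<le> b"
    and deriv: "\<And>t. t \<in> {a..b} \<Longrightarrow> (w has_real_derivative w' t) (at t within {a..b})"
    and growth: "\<And>t. t \<in> {a..b} \<Longrightarrow> \<bar>w' t\<bar> \<le> K * w t"
    and nonneg: "\<And>t. t \<in> {a..b} \<Longrightarrow> 0 \<le> w t"
  shows "w a = 0 \<longleftrightarrow> w b = 0"
proof -
  have mvt: "\<exists>z\<in>{a..b}. exp (c*b) * w b - exp (c*a) * w a = exp (c*z) * (c * w z + w' z) * (b - a)" for c
  proof -
    have "((\<lambda>t. exp (c*t) * w t) has_real_derivative exp (c*t) * (c * w t + w' t)) (at t within {a..b})"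
      if "t \<in> {a..b}" for t
      using deriv[OF that] by (auto intro!: derivative_eq_intros simp: algebra_simps)
    then have "\<And>t. a \<le> t \<Longrightarrow> t \<le> b \<Longrightarrow> ((\<lambda>t. exp (c*t) * w t) has_derivative
        (*) (exp (c*t) * (c * w t + w' t))) (at t within {a..b})"
      by (simp add: has_field_derivative_def)
    from mvt_very_simple[OF \<open>a \<le> b\<close> this] show ?thesis
      by (auto simp: mult.commute)
  qed
  obtain z where z: "z \<in> {a..b}" "exp (-K*b) * w b - exp (-K*a) * w a = exp (-K*z) * (w' z - K * w z) * (b - a)"
    using mvt[of "-K"] by (auto simp: algebra_simps)
  have "exp (-K*z) * (w' z - K * w z) * (b - a) \<le> 0"
    using growth[OF z(1)] \<open>a \<le> b\<close> by (intro mult_nonpos_nonneg mult_nonneg_nonpos) auto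
  then have decreasing: "exp (-K*b) * w b \<le> exp (-K*a) * w a"
    using z(2) by linarith
  obtain z' where z': "z' \<in> {a..b}" "exp (K*b) * w b - exp (K*a) * w a = exp (K*z') * (K * w z' + w' z') * (b - a)"
    using mvt[of K] by blast
  have "0 \<le> exp (K*z') * (K * w z' + w' z') * (b - a)"
    using growth[OF z'(1)] \<open>a \<le> b\<close> by (intro mult_nonneg_nonneg) auto
  then have increasing: "exp (K*a) * w a \<le> exp (K*b) * w b"
    using z'(2) by linarith
  have "w a \<ge> 0" "w b \<ge> 0" using nonneg \<open>a \<le> b\<close> by auto
  then show ?thesis
    using decreasing increasing by (auto simp: mult_le_0_iff)
qed

lemma has_vector_derivative_bounded_on_interval:
  fixes x :: "real \<Rightarrow> 'a::real_normed_vector"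
  assumes "\<And>t. t \<in> {a..b} \<Longrightarrow> (x has_vector_derivative X t) (at t within {a..b})"
  obtains R where "\<And>t. t \<in> {a..b} \<Longrightarrow> norm (x t) \<le> R"
proof -
  have "continuous_on {a..b} x"
    using assms by (meson continuous_on_eq_continuous_within has_vector_derivative_continuous)
  then have "bounded (x ` {a..b})" by (intro compact_imp_bounded compact_continuous_image) auto
  then obtain R where "\<forall>t\<in>{a..b}. norm (x t) \<le> R" unfolding bounded_iff by auto
  then show ?thesis using that by blast
qed

lemma has_real_derivative_inner_diff_self:
  fixes x y :: "real \<Rightarrow> 'a::real_inner"
  assumes "(x has_vector_derivative X) (at s within S)" "(y has_vector_derivative Y) (at s within S)"
  shows "((\<lambda>s. (x s - y s) \<bullet> (x s - y s)) has_real_derivative 2 * ((x s - y s) \<bullet> (X - Y))) (at s within S)"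
proof -
  let ?u = "x s - y s"
  have "((\<lambda>s. (x s - y s) \<bullet> (x s - y s)) has_derivative
      (\<lambda>h. ?u \<bullet> (h *\<^sub>R X - h *\<^sub>R Y) + (h *\<^sub>R X - h *\<^sub>R Y) \<bullet> ?u)) (at s within S)"
    using assms unfolding has_vector_derivative_def by (intro derivative_intros)
  moreover have "(\<lambda>h. ?u \<bullet> (h *\<^sub>R X - h *\<^sub>R Y) + (h *\<^sub>R X - h *\<^sub>R Y) \<bullet> ?u) = (*) (2 * (?u \<bullet> (X - Y)))"
    by (intro ext) (simp add: inner_commute inner_diff_right inner_diff_left algebra_simps)
  ultimately show ?thesis by (simp add: has_field_derivative_def)
qed

lemma norm_integral_diff_le:
  fixes g :: "real \<Rightarrow> 'a::euclidean_space"
  assumes g: "continuous_on {a..b} g" and k: "continuous_on {a..b} k"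
    and cd: "c \<in> {a..b}" "d \<in> {a..b}"
    and le: "\<And>s. s \<in> {min c d..max c d} \<Longrightarrow> norm (g s) \<le> k s"
  shows "norm (integral {a..c} g - integral {a..d} g) \<le> integral {min c d..max c d} k"
proof -
  have main: "norm (integral {a..c} g - integral {a..d} g) \<le> integral {d..c} k"
    if "d \<le> c" "c \<in> {a..b}" "d \<in> {a..b}" "\<And>s. s \<in> {d..c} \<Longrightarrow> norm (g s) \<le> k s" for c d
  proof -
    have sub: "{a..c} \<subseteq> {a..b}" "{d..c} \<subseteq> {a..b}" using that by auto
    have "integral {a..d} g + integral {d..c} g = integral {a..c} g"
      using that by (intro Henstock_Kurzweil_Integration.integral_combine integrable_continuous_interval
          continuous_on_subset[OF g sub(1)]) auto
    then have "norm (integral {a..c} g - integral {a..d} g) = norm (integral {d..c} g)"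
      by (metis add_diff_cancel_left')
    also have "\<dots> \<le> integral {d..c} k"
      using that by (intro Henstock_Kurzweil_Integration.integral_norm_bound_integral integrable_continuous_interval
          continuous_on_subset[OF g sub(2)] continuous_on_subset[OF k sub(2)]) auto
    finally show ?thesis .
  qed
  show ?thesis
  proof (cases "d \<le> c")
    case True
    then show ?thesis using main[OF True cd] le by (simp add: max_def min_def)
  next
    case False
    then have "norm (integral {a..d} g - integral {a..c} g) \<le> integral {c..d} k"
      using main[of c d] cd le by (simp add: max_def min_def)
    then show ?thesis using False by (simp add: norm_minus_commute max_def min_def)
  qed
qed

lemma has_integral_abs_power:
  fixes c t0 :: real
  shows "((\<lambda>s. \<bar>s - t0\<bar> ^ n) has_integral \<bar>c - t0\<bar> ^ Suc n / Suc n) {min c t0..max c t0}"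
proof (cases "t0 \<le> c")
  case True
  have "((\<lambda>s. (s - t0) ^ Suc n) has_real_derivative (1 + real n) * ((1 - 0) * (s - t0) ^ n)) (at s within {t0..c})" for s
    by (rule DERIV_power_Suc[OF DERIV_diff[OF DERIV_ident DERIV_const]])
  from DERIV_cdivide[OF this, where c="real (Suc n)"]
  have "((\<lambda>s. (s - t0) ^ Suc n / Suc n) has_real_derivative (s - t0) ^ n) (at s within {t0..c})" for s
    by simp
  then have "((\<lambda>s. (s - t0) ^ n) has_integral (c - t0) ^ Suc n / Suc n - (t0 - t0) ^ Suc n / Suc n) {t0..c}"
    using True by (intro fundamental_theorem_of_calculus) (simp_all add: has_real_derivative_iff_has_vector_derivative)
  then have "((\<lambda>s. \<bar>s - t0\<bar> ^ n) has_integral (c - t0) ^ Suc n / Suc n) {t0..c}"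
    by (subst has_integral_cong[where g="\<lambda>s. (s - t0) ^ n"]) auto
  moreover have "min c t0 = t0" "max c t0 = c" "\<bar>c - t0\<bar> = c - t0" using True by auto
  ultimately show ?thesis by simp
next
  case False
  have "((\<lambda>s. (t0 - s) ^ Suc n) has_real_derivative (1 + real n) * ((0 - 1) * (t0 - s) ^ n)) (at s within {c..t0})" for s
    by (rule DERIV_power_Suc[OF DERIV_diff[OF DERIV_const DERIV_ident]])
  from DERIV_minus[OF DERIV_cdivide[OF this, where c="real (Suc n)"]]
  have "((\<lambda>s. - ((t0 - s) ^ Suc n / Suc n)) has_real_derivative (t0 - s) ^ n) (at s within {c..t0})" for s
    by simp
  then have "((\<lambda>s. (t0 - s) ^ n) has_integral - ((t0 - t0) ^ Suc n / Suc n) - - ((t0 - c) ^ Suc n / Suc n)) {c..t0}"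
    using False by (intro fundamental_theorem_of_calculus) (simp_all add: has_real_derivative_iff_has_vector_derivative)
  then have "((\<lambda>s. \<bar>s - t0\<bar> ^ n) has_integral (t0 - c) ^ Suc n / Suc n) {c..t0}"
    by (subst has_integral_cong[where g="\<lambda>s. (t0 - s) ^ n"]) auto
  moreover have "min c t0 = c" "max c t0 = t0" "\<bar>c - t0\<bar> = t0 - c" using False by auto
  ultimately show ?thesis by simp
qed

lemma clamp_real_in_interval:
  fixes a b t :: real
  assumes "a \<le> b"
  shows "clamp a b t \<in> {a..b}"
  using clamp_in_interval[of a b t] assms by simp

lemma clamp_real_id: "t \<in> {a..b} \<Longrightarrow> clamp a b t = (t::real)"
  using clamp_cancel_cbox[of t a b] by simp

lemma mem_cball_const_bcontfun:
  "x \<in> cball (const_bcontfun c) r \<longleftrightarrow> (\<forall>t. norm (apply_bcontfun x t - c) \<le> r)"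
proof
  assume "x \<in> cball (const_bcontfun c) r"
  then have "dist x (const_bcontfun c) \<le> r" by (simp add: dist_commute)
  moreover have "dist (apply_bcontfun x t) c \<le> dist x (const_bcontfun c)" for t
    using dist_bounded[of x t "const_bcontfun c"] by (simp add: const_bcontfun.rep_eq)
  ultimately show "\<forall>t. norm (apply_bcontfun x t - c) \<le> r"
    by (auto simp: dist_norm[symmetric] intro: order_trans)
next
  assume "\<forall>t. norm (apply_bcontfun x t - c) \<le> r"
  then have "dist x (const_bcontfun c) \<le> r"
    by (intro dist_bound) (simp add: dist_norm const_bcontfun.rep_eq)
  then show "x \<in> cball (const_bcontfun c) r" by (simp add: dist_commute)
qed

locale bounded_lipschitz_ode =
  fixes F :: "real \<Rightarrow> 'a::euclidean_space \<Rightarrow> 'a" and B :: real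
  assumes continuous_along_paths: "\<And>x. continuous_on UNIV x \<Longrightarrow> continuous_on UNIV (\<lambda>t. F t (x t))"
    and bounded: "\<And>t p. norm (F t p) \<le> B"
    and locally_lipschitz: "\<And>R. \<exists>L. \<forall>t. L-lipschitz_on (cball 0 R) (F t)"
begin

lemma solution_unique:
  assumes I: "is_interval I" "t0 \<in> I" "t \<in> I"
    and x: "\<And>s. s \<in> I \<Longrightarrow> (x has_vector_derivative F s (x s)) (at s within I)"
    and y: "\<And>s. s \<in> I \<Longrightarrow> (y has_vector_derivative F s (y s)) (at s within I)"
    and init: "x t0 = y t0"
  shows "x t = y t"
proof -
  define a b where "a = min t0 t" and "b = max t0 t"
  have "a \<in> I" "b \<in> I" using I unfolding a_def b_def by (simp_all add: min_def max_def)
  then have sub: "{a..b} \<subseteq> I" using I(1) unfolding is_interval_1 by fastforce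
  have ab: "a \<le> b" unfolding a_def b_def by simp
  have x': "(x has_vector_derivative F s (x s)) (at s within {a..b})"
    and y': "(y has_vector_derivative F s (y s)) (at s within {a..b})" if "s \<in> {a..b}" for s
    using x[of s] y[of s] that sub by (simp_all add: subsetD has_vector_derivative_within_subset)
  obtain Rx where Rx: "\<And>s. s \<in> {a..b} \<Longrightarrow> norm (x s) \<le> Rx"
    using has_vector_derivative_bounded_on_interval[OF x'] by blast
  obtain Ry where Ry: "\<And>s. s \<in> {a..b} \<Longrightarrow> norm (y s) \<le> Ry"
    using has_vector_derivative_bounded_on_interval[OF y'] by blast
  obtain L where L: "\<And>s. L-lipschitz_on (cball 0 (max Rx Ry)) (F s)"
    using locally_lipschitz by blast
  define w where "w s = (x s - y s) \<bullet> (x s - y s)" for s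
  define w' where "w' s = 2 * ((x s - y s) \<bullet> (F s (x s) - F s (y s)))" for s
  have deriv: "(w has_real_derivative w' s) (at s within {a..b})" if "s \<in> {a..b}" for s
    unfolding w_def w'_def by (rule has_real_derivative_inner_diff_self[OF x'[OF that] y'[OF that]])
  have growth: "\<bar>w' s\<bar> \<le> 2 * L * w s" if "s \<in> {a..b}" for s
  proof -
    have "x s \<in> cball 0 (max Rx Ry)" "y s \<in> cball 0 (max Rx Ry)"
      using Rx[OF that] Ry[OF that] by auto
    then have "norm (F s (x s) - F s (y s)) \<le> L * norm (x s - y s)"
      using lipschitz_onD[OF L] by (simp add: dist_norm)
    then have "\<bar>(x s - y s) \<bullet> (F s (x s) - F s (y s))\<bar> \<le> norm (x s - y s) * (L * norm (x s - y s))"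
      using Cauchy_Schwarz_ineq2 mult_left_mono norm_ge_zero order_trans by metis
    then show ?thesis
      by (simp add: w_def w'_def power2_norm_eq_inner[symmetric] power2_eq_square abs_mult mult.left_commute)
  qed
  have "w a = 0 \<longleftrightarrow> w b = 0"
    using gronwall_endpoint_zero_iff[OF ab deriv growth] by (simp add: w_def)
  moreover have "w t0 = 0" using init by (simp add: w_def)
  ultimately have "w t = 0" unfolding a_def b_def by (cases "t0 \<le> t") (simp_all add: min_def max_def)
  then show ?thesis by (simp add: w_def)
qed

lemma continuous_on_along_bcontfun: "continuous_on UNIV (\<lambda>s. F s (apply_bcontfun x s))"
  by (rule continuous_along_paths) simp

context
  fixes a b t0 :: real and p0 :: 'a
  assumes t0_in: "t0 \<in> {a..b}"
begin

text \<open>Time is clamped to [a, b], so that the Picard operator acts on the complete space of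
  bounded continuous functions on the whole line.\<close>

definition picard_map :: "(real \<Rightarrow>\<^sub>C 'a) \<Rightarrow> real \<Rightarrow> 'a" where
  "picard_map x t = p0 + (integral {a..clamp a b t} (\<lambda>s. F s (x s)) - integral {a..t0} (\<lambda>s. F s (x s)))"

lemma picard_map_dist_initial: "norm (picard_map x t - p0) \<le> B * (b - a)"
proof -
  have ab: "a \<le> b" using t0_in by simp
  let ?c = "clamp a b t"
  have "norm (picard_map x t - p0) \<le> integral {min ?c t0..max ?c t0} (\<lambda>_. B)"
    unfolding picard_map_def add_diff_cancel_left'
    by (rule norm_integral_diff_le[where b=b])
      (use clamp_real_in_interval[OF ab] t0_in in
        \<open>auto intro: continuous_on_subset[OF continuous_on_along_bcontfun] bounded\<close>)
  also have "\<dots> = (max ?c t0 - min ?c t0) * B" by simp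
  also have "\<dots> \<le> (b - a) * B"
    using clamp_real_in_interval[OF ab, of t] t0_in order_trans[OF norm_ge_zero bounded]
    by (intro mult_right_mono) auto
  finally show ?thesis by (simp add: mult.commute)
qed

lemma picard_map_bcontfun: "picard_map x \<in> bcontfun"
proof -
  have ab: "a \<le> b" using t0_in by simp
  have "continuous_on {a..b} (\<lambda>c. integral {a..c} (\<lambda>s. F s (x s)))"
    by (intro indefinite_integral_continuous_1 integrable_continuous_interval
        continuous_on_subset[OF continuous_on_along_bcontfun]) auto
  then have "continuous_on UNIV (picard_map x)"
    unfolding picard_map_def using ab by (intro continuous_intros clamp_continuous_on) simp
  moreover have "norm (picard_map x t) \<le> norm p0 + B * (b - a)" for t
    using picard_map_dist_initial[of x t] norm_triangle_sub[of "picard_map x t" p0] by simp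
  ultimately show ?thesis
    unfolding bcontfun_def bounded_iff by auto
qed

definition picard :: "(real \<Rightarrow>\<^sub>C 'a) \<Rightarrow> (real \<Rightarrow>\<^sub>C 'a)" where
  "picard x = Bcontfun (picard_map x)"

lemma apply_picard: "apply_bcontfun (picard x) = picard_map x"
  unfolding picard_def using picard_map_bcontfun by (simp add: Bcontfun_inverse)

lemma picard_map_diff:
  "picard_map u t - picard_map v t
    = integral {a..clamp a b t} (\<lambda>s. F s (u s) - F s (v s)) - integral {a..t0} (\<lambda>s. F s (u s) - F s (v s))"
  using integrable_continuous_interval[OF continuous_on_subset[OF continuous_on_along_bcontfun]]
  by (simp add: picard_map_def integral_diff algebra_simps)

lemma picard_iterate_dist_initial:
  fixes x :: "real \<Rightarrow>\<^sub>C 'a"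
  assumes "\<And>t. norm (x t - p0) \<le> B * (b - a)"
  shows "norm ((picard ^^ n) x t - p0) \<le> B * (b - a)"
  using assms picard_map_dist_initial by (cases n) (simp_all add: apply_picard)

lemma picard_iterate_in_ball:
  fixes x :: "real \<Rightarrow>\<^sub>C 'a"
  assumes "\<And>t. norm (x t - p0) \<le> B * (b - a)"
  shows "(picard ^^ n) x t \<in> cball 0 (norm p0 + B * (b - a))"
  using picard_iterate_dist_initial[OF assms, of n t] norm_triangle_sub[of "(picard ^^ n) x t" p0] by simp

lemma picard_iterate_dist:
  fixes u v :: "real \<Rightarrow>\<^sub>C 'a"
  assumes L: "\<And>s. L-lipschitz_on (cball 0 (norm p0 + B * (b - a))) (F s)"
    and u: "\<And>t. norm (u t - p0) \<le> B * (b - a)" and v: "\<And>t. norm (v t - p0) \<le> B * (b - a)"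
  shows "norm ((picard ^^ n) u t - (picard ^^ n) v t) \<le> (L * \<bar>clamp a b t - t0\<bar>) ^ n / fact n * dist u v"
proof (induction n arbitrary: t)
  case 0
  show ?case using dist_bounded[of u t v] by (simp add: dist_norm)
next
  case (Suc n)
  define U V where "U = (picard ^^ n) u" and "V = (picard ^^ n) v"
  define c where "c = clamp a b t"
  have ab: "a \<le> b" using t0_in by simp
  have c: "c \<in> {a..b}" unfolding c_def using clamp_real_in_interval[OF ab] .
  have cont: "continuous_on {a..b} (\<lambda>s. F s (U s) - F s (V s))"
    by (intro continuous_intros continuous_on_subset[OF continuous_on_along_bcontfun]) auto
  have "(picard ^^ Suc n) u t - (picard ^^ Suc n) v t
      = integral {a..c} (\<lambda>s. F s (U s) - F s (V s)) - integral {a..t0} (\<lambda>s. F s (U s) - F s (V s))"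
    by (simp add: apply_picard picard_map_diff U_def V_def c_def)
  also have "norm \<dots> \<le> integral {min c t0..max c t0} (\<lambda>s. L ^ Suc n * dist u v / fact n * \<bar>s - t0\<bar> ^ n)"
  proof (rule norm_integral_diff_le[OF cont _ c t0_in])
    show "continuous_on {a..b} (\<lambda>s. L ^ Suc n * dist u v / fact n * \<bar>s - t0\<bar> ^ n)"
      by (intro continuous_intros)
    fix s assume s: "s \<in> {min c t0..max c t0}"
    then have "s \<in> {a..b}" using c t0_in by auto
    have "U s \<in> cball 0 (norm p0 + B * (b - a))" "V s \<in> cball 0 (norm p0 + B * (b - a))"
      unfolding U_def V_def by (rule picard_iterate_in_ball[OF u], rule picard_iterate_in_ball[OF v])
    then have "norm (F s (U s) - F s (V s)) \<le> L * norm (U s - V s)"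
      using lipschitz_onD[OF L] by (simp add: dist_norm)
    also have "\<dots> \<le> L * ((L * \<bar>s - t0\<bar>) ^ n / fact n * dist u v)"
      using Suc.IH[of s] clamp_real_id[OF \<open>s \<in> {a..b}\<close>] lipschitz_on_nonneg[OF L]
      unfolding U_def V_def by (intro mult_left_mono) auto
    finally show "norm (F s (U s) - F s (V s)) \<le> L ^ Suc n * dist u v / fact n * \<bar>s - t0\<bar> ^ n"
      by (simp add: power_mult_distrib mult_ac)
  qed
  also have "\<dots> = L ^ Suc n * dist u v / fact n * (\<bar>c - t0\<bar> ^ Suc n / Suc n)"
    by (rule integral_unique[OF has_integral_mult_right[OF has_integral_abs_power]])
  also have "\<dots> = (L * \<bar>c - t0\<bar>) ^ Suc n / fact (Suc n) * dist u v"
    by (simp add: power_mult_distrib field_simps)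
  finally show ?case unfolding c_def .
qed

lemma picard_fixpoint: obtains z where "picard z = z"
proof -
  have ab: "a \<le> b" using t0_in by simp
  define S :: "(real \<Rightarrow>\<^sub>C 'a) set" where "S = cball (const_bcontfun p0) (B * (b - a))"
  have iterate_in_S: "(picard ^^ n) x \<in> S" if "x \<in> S" for n x
    using that picard_iterate_dist_initial unfolding S_def mem_cball_const_bcontfun by blast
  have nonempty: "const_bcontfun p0 \<in> S"
    using order_trans[OF norm_ge_zero bounded] ab unfolding S_def by simp
  obtain L where L: "\<And>s. L-lipschitz_on (cball 0 (norm p0 + B * (b - a))) (F s)"
    using locally_lipschitz by blast
  have "(\<lambda>n. (L * (b - a)) ^ n / fact n) \<longlonglongrightarrow> 0"
    using summable_LIMSEQ_zero[OF summable_exp] by (simp add: inverse_eq_divide)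
  then have "eventually (\<lambda>n. (L * (b - a)) ^ n / fact n < 1) sequentially"
    by (rule order_tendstoD(2)) simp
  then obtain N where N: "(L * (b - a)) ^ N / fact N < 1"
    unfolding eventually_sequentially by blast
  have contraction: "dist ((picard ^^ N) u) ((picard ^^ N) v) \<le> (L * (b - a)) ^ N / fact N * dist u v"
    if "u \<in> S" "v \<in> S" for u v
  proof (rule dist_bound)
    fix t
    have "dist ((picard ^^ N) u t) ((picard ^^ N) v t) \<le> (L * \<bar>clamp a b t - t0\<bar>) ^ N / fact N * dist u v"
      using picard_iterate_dist[OF L] that unfolding S_def mem_cball_const_bcontfun by (simp add: dist_norm)
    also have "\<dots> \<le> (L * (b - a)) ^ N / fact N * dist u v"
      using clamp_real_in_interval[OF ab, of t] t0_in lipschitz_on_nonneg[OF L]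
      by (intro mult_right_mono divide_right_mono power_mono mult_left_mono) auto
    finally show "dist ((picard ^^ N) u t) ((picard ^^ N) v t) \<le> (L * (b - a)) ^ N / fact N * dist u v" .
  qed
  have "\<exists>!z\<in>S. (picard ^^ N) z = z"
    using ab lipschitz_on_nonneg[OF L] iterate_in_S nonempty N contraction
    by (intro Banach_fix[where c="(L * (b - a)) ^ N / fact N"]) (auto simp: S_def complete_eq_closed)
  then obtain z where z: "z \<in> S" "(picard ^^ N) z = z" and unique: "\<And>y. y \<in> S \<Longrightarrow> (picard ^^ N) y = y \<Longrightarrow> y = z"
    by blast
  have "(picard ^^ N) (picard z) = picard z" by (metis funpow_swap1 z(2))
  moreover have "picard z \<in> S" using iterate_in_S[OF z(1), of 1] by simp
  ultimately have "picard z = z" using unique by blast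
  then show ?thesis by (rule that)
qed

lemma exists_solution_on_interval:
  "\<exists>x. x t0 = p0 \<and> (\<forall>t\<in>{a..b}. (x has_vector_derivative F t (x t)) (at t within {a..b}))"
proof -
  obtain z where z: "picard z = z" by (rule picard_fixpoint)
  have z_eq: "z t = p0 + (integral {a..t} (\<lambda>s. F s (z s)) - integral {a..t0} (\<lambda>s. F s (z s)))"
    if "t \<in> {a..b}" for t
    using arg_cong[OF z, of "\<lambda>x. apply_bcontfun x t"] clamp_real_id[OF that]
    by (simp add: apply_picard picard_map_def)
  show ?thesis
  proof (intro exI conjI ballI)
    show "z t0 = p0" using z_eq[OF t0_in] by simp
    fix t assume t: "t \<in> {a..b}"
    have "((\<lambda>t. p0 + (integral {a..t} (\<lambda>s. F s (z s)) - integral {a..t0} (\<lambda>s. F s (z s))))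
        has_vector_derivative F t (z t)) (at t within {a..b})"
      using integral_has_vector_derivative[OF continuous_on_subset[OF continuous_on_along_bcontfun] t]
      by (auto intro!: derivative_eq_intros)
    then show "(z has_vector_derivative F t (z t)) (at t within {a..b})"
      by (rule has_vector_derivative_transform_within[where d=1]) (use t in \<open>auto simp: z_eq[symmetric]\<close>)
  qed
qed

end

lemma solutions_agree_on_nested_intervals:
  assumes "0 \<le> r" "r \<le> r'" "\<bar>s - t0\<bar> \<le> r" "x t0 = y t0"
    and x: "\<And>t. t \<in> {t0-r..t0+r} \<Longrightarrow> (x has_vector_derivative F t (x t)) (at t within {t0-r..t0+r})"
    and y: "\<And>t. t \<in> {t0-r'..t0+r'} \<Longrightarrow> (y has_vector_derivative F t (y t)) (at t within {t0-r'..t0+r'})"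
  shows "x s = y s"
proof (rule solution_unique[OF is_interval_cc _ _ x])
  have sub: "{t0-r..t0+r} \<subseteq> {t0-r'..t0+r'}" using assms by auto
  show "(y has_vector_derivative F t (y t)) (at t within {t0-r..t0+r})" if "t \<in> {t0-r..t0+r}" for t
    using y[of t] that sub by (simp add: subsetD has_vector_derivative_within_subset)
qed (use assms in \<open>auto simp: abs_le_iff\<close>)

lemma exists_solution:
  "\<exists>x. x t0 = p0 \<and> (\<forall>t. (x has_vector_derivative F t (x t)) (at t))"
proof -
  have "\<forall>r. \<exists>x. 0 \<le> r \<longrightarrow> x t0 = p0 \<and>
      (\<forall>t\<in>{t0-r..t0+r}. (x has_vector_derivative F t (x t)) (at t within {t0-r..t0+r}))"
    using exists_solution_on_interval by simp
  then obtain X where X_init: "\<And>r. 0 \<le> r \<Longrightarrow> X r t0 = p0"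
    and X_deriv: "\<And>r t. 0 \<le> r \<Longrightarrow> t \<in> {t0-r..t0+r} \<Longrightarrow>
      (X r has_vector_derivative F t (X r t)) (at t within {t0-r..t0+r})"
    by metis
  have agree: "X r s = X r' s" if "0 \<le> r" "r \<le> r'" "\<bar>s - t0\<bar> \<le> r" for r r' s
  proof (rule solutions_agree_on_nested_intervals[OF that])
    show "X r t0 = X r' t0" using X_init that by simp
  qed (use that in \<open>simp_all add: X_deriv\<close>)
  define x where "x t = X (\<bar>t - t0\<bar> + 1) t" for t
  have "(x has_vector_derivative F t (x t)) (at t)" for t
  proof -
    define r where "r = \<bar>t - t0\<bar> + 1"
    have r: "0 \<le> r" "t0 - r < t" "t < t0 + r" unfolding r_def by auto
    then have deriv: "(X r has_vector_derivative F t (X r t)) (at t)"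
      using X_deriv[OF r(1), of t] at_within_Icc_at[OF r(2,3)] by simp
    have agree_near: "X r s = x s" if "s \<in> ball t 1" for s
    proof (cases "\<bar>s - t0\<bar> \<le> \<bar>t - t0\<bar>")
      case True
      then show ?thesis using agree[of "\<bar>s - t0\<bar> + 1" r s] unfolding x_def r_def by simp
    next
      case False
      then have "\<bar>s - t0\<bar> \<le> r" using that unfolding r_def by (auto simp: dist_real_def)
      then show ?thesis using False agree[of r "\<bar>s - t0\<bar> + 1" s] r(1) unfolding x_def r_def by simp
    qed
    have "x t = X r t" unfolding x_def r_def ..
    then show ?thesis
      using has_vector_derivative_transform_within_open[OF deriv open_ball[of t 1] _ agree_near] by simp
  qed
  moreover have "x t0 = p0" using X_init[of 1] by (simp add: x_def)
  ultimately show ?thesis by blast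
qed

theorem exists_unique_solution:
  "\<exists>x. x t0 = p0 \<and>
     (\<forall>t. (x has_vector_derivative F t (x t)) (at t)) \<and>
     (\<forall>I y. is_interval I \<and> t0 \<in> I \<and> y t0 = p0 \<and>
        (\<forall>t\<in>I. (y has_vector_derivative F t (y t)) (at t within I))
        \<longrightarrow> (\<forall>t\<in>I. y t = x t))"
proof -
  obtain x where x: "x t0 = p0" "\<And>t. (x has_vector_derivative F t (x t)) (at t)"
    using exists_solution by blast
  have "y t = x t" if I: "is_interval I" "t0 \<in> I" "t \<in> I" and "y t0 = p0"
    and y: "\<forall>t\<in>I. (y has_vector_derivative F t (y t)) (at t within I)" for I y t
  proof (rule solution_unique[OF I])
    show "(y has_vector_derivative F s (y s)) (at s within I)" if "s \<in> I" for s
      using y that by blast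
    show "(x has_vector_derivative F s (x s)) (at s within I)" for s
      using x(2) by (rule has_vector_derivative_at_within)
    show "y t0 = x t0" using x(1) \<open>y t0 = p0\<close> by simp
  qed
  then show ?thesis using x by blast
qed

end

section \<open>Lipschitz estimates\<close>

lemma lipschitz_on_sum:
  fixes f :: "'i \<Rightarrow> 'a::metric_space \<Rightarrow> 'b::real_normed_vector"
  assumes "\<And>k. k \<in> A \<Longrightarrow> (C k)-lipschitz_on U (f k)"
  shows "(\<Sum>k\<in>A. C k)-lipschitz_on U (\<lambda>x. \<Sum>k\<in>A. f k x)"
proof (cases "finite A")
  case True
  then show ?thesis using assms
    by (induction A rule: finite_induct) (auto intro: lipschitz_on_add lipschitz_on_constant)
qed (simp add: lipschitz_on_constant)

lemma lipschitz_on_vec_lambda: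
  fixes f :: "'i::finite \<Rightarrow> 'a::metric_space \<Rightarrow> 'b::real_normed_vector"
  assumes "\<And>i. (C i)-lipschitz_on U (f i)"
  shows "(\<Sum>i\<in>UNIV. C i)-lipschitz_on U (\<lambda>x. \<chi> i. f i x)"
proof (rule lipschitz_onI)
  fix x y assume "x \<in> U" "y \<in> U"
  have "dist (\<chi> i. f i x) (\<chi> i. f i y) \<le> (\<Sum>i\<in>UNIV. dist (f i x) (f i y))"
    unfolding dist_vec_def by (simp add: L2_set_le_sum)
  also have "\<dots> \<le> (\<Sum>i\<in>UNIV. C i * dist x y)"
    using lipschitz_onD[OF assms \<open>x \<in> U\<close> \<open>y \<in> U\<close>] by (intro sum_mono)
  finally show "dist (\<chi> i. f i x) (\<chi> i. f i y) \<le> (\<Sum>i\<in>UNIV. C i) * dist x y"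
    by (simp add: sum_distrib_right)
qed (use lipschitz_on_nonneg[OF assms] in \<open>simp add: sum_nonneg\<close>)

lemma lipschitz_on_scaleR_vector:
  fixes f :: "'a::metric_space \<Rightarrow> real"
  assumes "C-lipschitz_on U f"
  shows "(C * norm v)-lipschitz_on U (\<lambda>x. f x *\<^sub>R v)"
proof (rule lipschitz_onI)
  fix x y assume "x \<in> U" "y \<in> U"
  have "dist (f x *\<^sub>R v) (f y *\<^sub>R v) = dist (f x) (f y) * norm v"
    by (simp add: dist_norm dist_real_def flip: scaleR_diff_left)
  also have "\<dots> \<le> C * dist x y * norm v"
    using lipschitz_onD[OF assms \<open>x \<in> U\<close> \<open>y \<in> U\<close>] by (intro mult_right_mono) auto
  finally show "dist (f x *\<^sub>R v) (f y *\<^sub>R v) \<le> C * norm v * dist x y"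
    by (simp add: mult_ac)
qed (use lipschitz_on_nonneg[OF assms] in simp)

lemma lipschitz_on_vec_nth: "1-lipschitz_on U (\<lambda>x. x $ i)"
  by (rule lipschitz_onI) (simp_all add: dist_vec_nth_le)

lemma lipschitz_on_norm:
  assumes "C-lipschitz_on U f"
  shows "C-lipschitz_on U (\<lambda>x. norm (f x))"
  using lipschitz_onD[OF assms] lipschitz_on_nonneg[OF assms]
  by (intro lipschitz_onI) (auto simp: dist_norm intro: order_trans[OF norm_triangle_ineq3])

lemma lipschitz_on_power2:
  fixes f :: "'a::metric_space \<Rightarrow> real"
  assumes "C-lipschitz_on U f" and "0 \<le> M" and "\<And>x. x \<in> U \<Longrightarrow> \<bar>f x\<bar> \<le> M"
  shows "(2 * M * C)-lipschitz_on U (\<lambda>x. (f x)\<^sup>2)"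
proof (rule lipschitz_onI)
  fix x y assume "x \<in> U" "y \<in> U"
  have "dist ((f x)\<^sup>2) ((f y)\<^sup>2) = dist (f x) (f y) * \<bar>f x + f y\<bar>"
    by (simp add: dist_real_def power2_eq_square abs_mult[symmetric] algebra_simps)
  also have "\<dots> \<le> (C * dist x y) * (2 * M)"
    using lipschitz_onD[OF assms(1) \<open>x \<in> U\<close> \<open>y \<in> U\<close>] assms(3)[OF \<open>x \<in> U\<close>] assms(3)[OF \<open>y \<in> U\<close>]
      order_trans[OF zero_le_dist]
    by (intro mult_mono) auto
  finally show "dist ((f x)\<^sup>2) ((f y)\<^sup>2) \<le> 2 * M * C * dist x y" by (simp add: mult_ac)
qed (use assms(2) lipschitz_on_nonneg[OF assms(1)] in simp)

lemma norm_vec_le_sum: "norm x \<le> (\<Sum>i\<in>UNIV. norm (x $ i))"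
  unfolding norm_vec_def by (rule L2_set_le_sum) simp

lemma norm_nth_diff_le:
  fixes p :: "'b::real_normed_vector ^ 'v"
  assumes "norm p \<le> R"
  shows "norm (p $ j - p $ i) \<le> 2 * R"
  using norm_triangle_ineq4[of "p $ j" "p $ i"] Finite_Cartesian_Product.norm_nth_le[of p j]
    Finite_Cartesian_Product.norm_nth_le[of p i] assms
  by linarith

lemma abs_le_if_lipschitz_on_cball:
  fixes f :: "'a::real_normed_vector \<Rightarrow> real"
  assumes "L-lipschitz_on (cball 0 R) f" "p \<in> cball 0 R"
  shows "\<bar>f p\<bar> \<le> \<bar>f 0\<bar> + L * R"
proof -
  have "0 \<in> cball 0 R" using assms(2) by (auto intro: order_trans[OF norm_ge_zero])
  then have "\<bar>f p - f 0\<bar> \<le> L * dist p 0"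
    using lipschitz_onD[OF assms(1) assms(2) \<open>0 \<in> cball 0 R\<close>] by (simp add: dist_real_def)
  also have "\<dots> \<le> L * R"
    using assms lipschitz_on_nonneg[OF assms(1)] by (intro mult_left_mono) (auto simp: dist_commute)
  finally show ?thesis by linarith
qed

section \<open>The closed-loop vector field\<close>

lemma admissible_h_bounded:
  assumes "admissible_h h h' h''"
  obtains M where "\<And>y. \<bar>h y\<bar> \<le> M"
proof -
  from assms obtain M where M: "\<forall>y>0. \<bar>h y\<bar> \<le> M" and zero: "\<forall>y\<le>0. h y = 0"
    unfolding admissible_h_def by blast
  have "\<bar>h y\<bar> \<le> max M 0" for y using M zero by (cases "y > 0") force+
  then show ?thesis by (rule that)
qed

lemma admissible_h_deriv_bounded:
  assumes "admissible_h h h' h''"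
  obtains C where "\<And>y. y \<in> {0<..K} \<Longrightarrow> \<bar>h' y\<bar> \<le> C"
proof -
  from assms have deriv: "\<forall>y>0. (h' has_real_derivative h'' y) (at y)"
    and "\<exists>C. eventually (\<lambda>y. \<bar>h' y\<bar> \<le> C) (at_right 0)"
    unfolding admissible_h_def by blast+
  then obtain C1 \<delta> where \<delta>: "\<delta> > 0" and C1: "\<And>y. 0 < y \<Longrightarrow> y < \<delta> \<Longrightarrow> \<bar>h' y\<bar> \<le> C1"
    unfolding eventually_at_right_field by blast
  have "isCont h' y" if "y \<in> {\<delta>..K}" for y
    by (rule DERIV_isCont[OF deriv[rule_format]]) (use that \<delta> in auto)
  then have "continuous_on {\<delta>..K} h'"
    by (intro continuous_at_imp_continuous_on) blast
  then obtain C2 where C2: "\<And>y. y \<in> {\<delta>..K} \<Longrightarrow> \<bar>h' y\<bar> \<le> C2"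
    using compact_Icc[of \<delta> K] by (metis compact_continuous_image compact_imp_bounded bounded_real imageI)
  have "\<bar>h' y\<bar> \<le> max C1 C2" if "y \<in> {0<..K}" for y
    using C1[of y] C2[of y] that by (cases "y < \<delta>") auto
  then show ?thesis by (rule that)
qed

lemma admissible_h_tendsto_zero:
  assumes "admissible_h h h' h''"
  shows "(h \<longlongrightarrow> 0) (at_right 0)"
proof -
  from assms obtain C where "eventually (\<lambda>y. \<bar>h y / y\<bar> \<le> C) (at_right 0)"
    unfolding admissible_h_def by blast
  then have "eventually (\<lambda>y. norm (h y) \<le> C * y) (at_right (0::real))"
    using eventually_at_right_less[of 0] by eventually_elim (simp add: abs_div divide_le_eq)
  moreover have "((\<lambda>y. C * y) \<longlongrightarrow> 0) (at_right (0::real))"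
    by (intro tendsto_eq_intros) auto
  ultimately show ?thesis by (rule Lim_null_comparison)
qed

lemma admissible_h_lipschitz_nonneg:
  assumes adm: "admissible_h h h' h''" and "0 < K"
  obtains L where "L-lipschitz_on {0..K} h"
proof -
  from adm have zero: "\<forall>y\<le>0. h y = 0" and deriv: "\<forall>y>0. (h has_real_derivative h' y) (at y)"
    unfolding admissible_h_def by blast+
  obtain C where C: "\<And>y. y \<in> {0<..K} \<Longrightarrow> \<bar>h' y\<bar> \<le> C"
    using admissible_h_deriv_bounded[OF adm] by blast
  have "(max C 0)-lipschitz_on {0<..K} h"
  proof (rule bounded_derivative_imp_lipschitz)
    fix y :: real assume y: "y \<in> {0<..K}"
    show "(h has_derivative (*) (h' y)) (at y within {0<..K})"
      using deriv y by (auto intro: has_derivative_at_withinI simp: has_field_derivative_def)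
    have "(*) (h' y) = (*\<^sub>R) (h' y)" by (rule ext) simp
    then have "onorm ((*) (h' y)) = \<bar>h' y\<bar> * onorm (\<lambda>x::real. x)"
      using onorm_scaleR[OF bounded_linear_ident, of "h' y"] by simp
    then have "onorm ((*) (h' y)) = \<bar>h' y\<bar>" by (simp add: onorm_id)
    then show "onorm ((*) (h' y)) \<le> max C 0" using C[OF y] by simp
  qed auto
  moreover have "continuous_on {0..K} h"
  proof (rule continuous_on_eq_continuous_within[THEN iffD2], rule ballI)
    fix y assume y: "y \<in> {0..K}"
    show "continuous (at y within {0..K}) h"
    proof (cases "y = 0")
      case True
      then show ?thesis
        using admissible_h_tendsto_zero[OF adm] zero \<open>0 < K\<close>
        by (simp add: continuous_within at_within_Icc_at_right)
    next
      case False
      then have "isCont h y"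
        by (intro DERIV_isCont[OF deriv[rule_format]]) (use y in auto)
      then show ?thesis by (rule continuous_at_imp_continuous_within)
    qed
  qed
  ultimately have "(max C 0)-lipschitz_on {0..K} h"
    using lipschitz_on_closure[of "max C 0" "{0<..K}" h] \<open>0 < K\<close> by simp
  then show ?thesis by (rule that)
qed

lemma admissible_h_lipschitz:
  assumes adm: "admissible_h h h' h''"
  obtains L where "L-lipschitz_on {-K..K} h"
proof -
  define K' where "K' = max K 1"
  have "0 < K'" unfolding K'_def by simp
  then obtain L where L: "L-lipschitz_on {0..K'} h"
    by (rule admissible_h_lipschitz_nonneg[OF adm])
  have zero: "\<And>y. y \<le> 0 \<Longrightarrow> h y = 0" using adm unfolding admissible_h_def by blast
  have "(max 0 L)-lipschitz_on {-K'..K'} (\<lambda>y. if y \<le> 0 then 0 else h y)"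
    by (rule lipschitz_on_concat_max[OF lipschitz_on_constant L]) (simp add: zero)
  then have "(max 0 L)-lipschitz_on {-K'..K'} h"
    by (rule lipschitz_on_transform) (simp add: zero)
  then show ?thesis
    by (rule that[OF lipschitz_on_subset]) (auto simp: K'_def)
qed

lemma admissible_h_continuous:
  assumes "admissible_h h h' h''"
  shows "continuous_on UNIV h"
proof (rule continuous_at_imp_continuous_on, rule ballI)
  fix y :: real
  obtain L where "L-lipschitz_on {-(\<bar>y\<bar> + 1)..\<bar>y\<bar> + 1} h"
    using admissible_h_lipschitz[OF assms] by blast
  then have "continuous_on {-(\<bar>y\<bar> + 1)..\<bar>y\<bar> + 1} h" by (rule lipschitz_on_continuous_on)
  then show "isCont h y" by (rule continuous_on_interior) auto
qed

lemma psi_lipschitz: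
  fixes E :: "'v::finite set set" and i :: 'v
  assumes "0 \<le> R"
  obtains L where "L-lipschitz_on (cball (0 :: (real^'n)^'v) R) (psi E d i)"
proof -
  let ?U = "cball (0 :: (real^'n)^'v) R"
  have bound: "norm (p $ j - p $ i) \<le> 2 * R" if "p \<in> ?U" for p :: "(real^'n)^'v" and j
    using that by (intro norm_nth_diff_le) simp
  have dist_sq: "(2 * (2 * R) * 2)-lipschitz_on ?U (\<lambda>p. (norm (p $ j - p $ i))\<^sup>2)" for j
    using bound assms
    by (intro lipschitz_on_power2 lipschitz_on_norm lipschitz_on_diff[OF lipschitz_on_vec_nth lipschitz_on_vec_nth,
          simplified one_add_one]) auto
  define g where "g j p = (norm (p $ j - p $ i))\<^sup>2 - (d {i, j})\<^sup>2" for j and p :: "(real^'n)^'v"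
  have g_lip: "(8 * R)-lipschitz_on ?U (g j)" for j
    using lipschitz_on_diff[OF dist_sq lipschitz_on_constant] unfolding g_def by simp
  have g_bound: "\<bar>g j p\<bar> \<le> 4 * R\<^sup>2 + (d {i, j})\<^sup>2" if "p \<in> ?U" for p j
  proof -
    have "(norm (p $ j - p $ i))\<^sup>2 \<le> (2 * R)\<^sup>2"
      using bound[OF that] by (intro power_mono) auto
    then have "(norm (p $ j - p $ i))\<^sup>2 \<le> 4 * R\<^sup>2" by (simp add: power_mult_distrib)
    moreover have "0 \<le> (norm (p $ j - p $ i))\<^sup>2" "0 \<le> (d {i, j})\<^sup>2" by simp_all
    ultimately show ?thesis unfolding g_def by linarith
  qed
  have "(1/4 * (\<Sum>j\<in>{j. {i, j} \<in> E}. 2 * (4 * R\<^sup>2 + (d {i, j})\<^sup>2) * (8 * R)))-lipschitz_on ?U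
      (\<lambda>p. 1/4 * (\<Sum>j\<in>{j. {i, j} \<in> E}. (g j p)\<^sup>2))"
    using g_lip g_bound by (intro lipschitz_on_cmult_real_nonneg lipschitz_on_sum lipschitz_on_power2) auto
  then have "(1/4 * (\<Sum>j\<in>{j. {i, j} \<in> E}. 2 * (4 * R\<^sup>2 + (d {i, j})\<^sup>2) * (8 * R)))-lipschitz_on ?U
      (psi E d i)"
    by (simp add: psi_def[abs_def] g_def)
  then show ?thesis by (rule that)
qed

lemma ctrl_lipschitz:
  fixes E :: "'v::finite set set" and i :: 'v
  assumes h1: "admissible_h h1 h1' h1''" and h2: "admissible_h h2 h2' h2''" and "0 \<le> R"
  obtains L where
    "\<And>k t. (\<bar>sqrt (\<omega> i k)\<bar> * L)-lipschitz_on (cball (0 :: (real^'n)^'v) R) (ctrl E d \<omega> \<phi> h1 h2 i k t)"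
proof -
  let ?U = "cball (0 :: (real^'n)^'v) R"
  obtain LP where LP: "LP-lipschitz_on ?U (psi E d i)"
    using psi_lipschitz[OF \<open>0 \<le> R\<close>] by blast
  define K where "K = \<bar>psi E d i (0 :: (real^'n)^'v)\<bar> + LP * R"
  have "psi E d i p \<in> {-K..K}" if "p \<in> ?U" for p
    using abs_le_if_lipschitz_on_cball[OF LP that] unfolding K_def by (auto simp: abs_le_iff)
  then have image: "psi E d i ` ?U \<subseteq> {-K..K}" by blast
  obtain L1 where L1: "L1-lipschitz_on {-K..K} h1" using admissible_h_lipschitz[OF h1] by blast
  obtain L2 where L2: "L2-lipschitz_on {-K..K} h2" using admissible_h_lipschitz[OF h2] by blast
  have comp1: "(L1 * LP)-lipschitz_on ?U (\<lambda>p. h1 (psi E d i p))"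
    by (rule lipschitz_on_compose2[OF LP lipschitz_on_subset[OF L1 image]])
  have comp2: "(L2 * LP)-lipschitz_on ?U (\<lambda>p. h2 (psi E d i p))"
    by (rule lipschitz_on_compose2[OF LP lipschitz_on_subset[OF L2 image]])
  have "(\<bar>sqrt (\<omega> i k)\<bar> * (L1 * LP) + \<bar>sqrt (\<omega> i k)\<bar> * (L2 * LP))-lipschitz_on ?U (ctrl E d \<omega> \<phi> h1 h2 i k t)"
    for k t
    unfolding ctrl_def[abs_def]
    by (intro lipschitz_on_add lipschitz_on_cmult_real_upper comp1 comp2)
      (auto simp: abs_mult mult_left_le)
  then have "(\<bar>sqrt (\<omega> i k)\<bar> * (L1 * LP + L2 * LP))-lipschitz_on ?U (ctrl E d \<omega> \<phi> h1 h2 i k t)" for k t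
    by (simp add: distrib_left)
  then show ?thesis by (rule that)
qed

lemma closed_loop_lipschitz:
  fixes E :: "'v::finite set set" and b :: "'v \<Rightarrow> 'n::finite \<Rightarrow> real^'n"
  assumes h1: "admissible_h h1 h1' h1''" and h2: "admissible_h h2 h2' h2''"
  shows "\<exists>L. \<forall>t. L-lipschitz_on (cball 0 R) (closed_loop E d b \<omega> \<phi> h1 h2 t)"
proof -
  define R' where "R' = max R 0"
  have "0 \<le> R'" unfolding R'_def by simp
  have "\<exists>L. \<forall>k t. (\<bar>sqrt (\<omega> i k)\<bar> * L)-lipschitz_on (cball (0 :: (real^'n)^'v) R') (ctrl E d \<omega> \<phi> h1 h2 i k t)"
    for i
    using ctrl_lipschitz[OF h1 h2 \<open>0 \<le> R'\<close>] by metis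
  then obtain L where L: "\<And>i k t. (\<bar>sqrt (\<omega> i k)\<bar> * L i)-lipschitz_on (cball 0 R') (ctrl E d \<omega> \<phi> h1 h2 i k t)"
    by metis
  have "(\<Sum>i\<in>UNIV. \<Sum>k\<in>UNIV. \<bar>sqrt (\<omega> i k)\<bar> * L i * norm (b i k))-lipschitz_on (cball 0 R')
      (closed_loop E d b \<omega> \<phi> h1 h2 t)" for t
    unfolding closed_loop_def[abs_def]
    by (intro lipschitz_on_vec_lambda lipschitz_on_sum lipschitz_on_scaleR_vector L)
  moreover have "cball 0 R \<subseteq> cball 0 R'" unfolding R'_def by auto
  ultimately show ?thesis by (blast intro: lipschitz_on_subset)
qed

lemma closed_loop_bounded:
  assumes h1: "admissible_h h1 h1' h1''" and h2: "admissible_h h2 h2' h2''"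
  obtains B where "\<And>t p. norm (closed_loop E d b \<omega> \<phi> h1 h2 t p) \<le> B"
proof -
  obtain M1 where M1: "\<And>y. \<bar>h1 y\<bar> \<le> M1" using admissible_h_bounded[OF h1] by blast
  obtain M2 where M2: "\<And>y. \<bar>h2 y\<bar> \<le> M2" using admissible_h_bounded[OF h2] by blast
  have ctrl: "\<bar>ctrl E d \<omega> \<phi> h1 h2 i k t p\<bar> \<le> \<bar>sqrt (\<omega> i k)\<bar> * (M1 + M2)" for i k t p
  proof -
    let ?s = "sqrt (\<omega> i k)" and ?a = "\<omega> i k * t + \<phi> i k" and ?y = "psi E d i p"
    have "\<bar>ctrl E d \<omega> \<phi> h1 h2 i k t p\<bar> \<le> \<bar>?s\<bar> * \<bar>cos ?a\<bar> * \<bar>h1 ?y\<bar> + \<bar>?s\<bar> * \<bar>sin ?a\<bar> * \<bar>h2 ?y\<bar>"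
      unfolding ctrl_def by (rule order_trans[OF abs_triangle_ineq]) (simp add: abs_mult)
    also have "\<dots> \<le> \<bar>?s\<bar> * 1 * M1 + \<bar>?s\<bar> * 1 * M2"
      using M1 M2 by (intro add_mono mult_mono) auto
    finally show ?thesis by (simp add: algebra_simps)
  qed
  have "norm (closed_loop E d b \<omega> \<phi> h1 h2 t p)
      \<le> (\<Sum>i\<in>UNIV. \<Sum>k\<in>UNIV. \<bar>sqrt (\<omega> i k)\<bar> * (M1 + M2) * norm (b i k))" for t p
  proof -
    have "norm (closed_loop E d b \<omega> \<phi> h1 h2 t p)
        \<le> (\<Sum>i\<in>UNIV. norm (\<Sum>k\<in>UNIV. ctrl E d \<omega> \<phi> h1 h2 i k t p *\<^sub>R b i k))"
      unfolding closed_loop_def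
      using norm_vec_le_sum[of "\<chi> i. \<Sum>k\<in>UNIV. ctrl E d \<omega> \<phi> h1 h2 i k t p *\<^sub>R b i k"] by simp
    also have "\<dots> \<le> (\<Sum>i\<in>UNIV. \<Sum>k\<in>UNIV. \<bar>sqrt (\<omega> i k)\<bar> * (M1 + M2) * norm (b i k))"
      using ctrl by (intro sum_mono order_trans[OF norm_sum]) (simp add: mult_right_mono)
    finally show ?thesis .
  qed
  then show ?thesis by (rule that)
qed

lemma closed_loop_continuous_along_paths:
  assumes h1: "admissible_h h1 h1' h1''" and h2: "admissible_h h2 h2' h2''"
    and x: "continuous_on UNIV x"
  shows "continuous_on UNIV (\<lambda>t. closed_loop E d b \<omega> \<phi> h1 h2 t (x t))"
proof -
  have psi: "continuous_on UNIV (\<lambda>t. psi E d i (x t))" for i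
    unfolding psi_def by (intro continuous_intros x)
  have "continuous_on UNIV (\<lambda>t. h1 (psi E d i (x t)))" "continuous_on UNIV (\<lambda>t. h2 (psi E d i (x t)))" for i
    using continuous_on_compose2[OF admissible_h_continuous[OF h1] psi]
      continuous_on_compose2[OF admissible_h_continuous[OF h2] psi] by auto
  then show ?thesis
    unfolding closed_loop_def ctrl_def by (intro continuous_intros)
qed

theorem proposition4p6:
  fixes E :: "'v::finite set set"
    and d :: "'v set \<Rightarrow> real"
    and b :: "'v \<Rightarrow> 'n::finite \<Rightarrow> real^'n"
    and \<omega> \<phi> :: "'v \<Rightarrow> 'n \<Rightarrow> real"
    and h1 h2 h1' h2' h1'' h2'' :: "real \<Rightarrow> real"
    and t0 :: real and p0 :: "(real^'n)^'v"
  assumes E_nonempty: "E \<noteq> {}"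
    and E_edges: "\<forall>e\<in>E. card e = 2"
    and d_nonneg: "\<forall>e\<in>E. d e \<ge> 0"
    and b_orthonormal: "\<forall>i k l. b i k \<bullet> b i l = (if k = l then 1 else 0)"
    and \<omega>_pos: "\<forall>i k. \<omega> i k > 0"
    and \<omega>_distinct: "inj (\<lambda>(i, k). \<omega> i k)"
    and h1_adm: "admissible_h h1 h1' h1''"
    and h2_adm: "admissible_h h2 h2' h2''"
    and h_cond: "\<exists>r' c'. r' > 0 \<and> c' > 0 \<and>
                   (\<forall>y. 0 < y \<and> y \<le> r' \<longrightarrow> h2' y * h1 y - h1' y * h2 y \<le> - c' * y)"
  shows "\<exists>x. x t0 = p0 \<and>
           (\<forall>t. (x has_vector_derivative closed_loop E d b \<omega> \<phi> h1 h2 t (x t)) (at t)) \<and>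
           (\<forall>I y. is_interval I \<and> t0 \<in> I \<and> y t0 = p0 \<and>
                  (\<forall>t\<in>I. (y has_vector_derivative closed_loop E d b \<omega> \<phi> h1 h2 t (y t)) (at t within I))
                  \<longrightarrow> (\<forall>t\<in>I. y t = x t))"
proof -
  obtain B where "\<And>t p. norm (closed_loop E d b \<omega> \<phi> h1 h2 t p) \<le> B"
    using closed_loop_bounded[OF h1_adm h2_adm] by blast
  then interpret bounded_lipschitz_ode "closed_loop E d b \<omega> \<phi> h1 h2" B
    by unfold_locales
      (auto intro: closed_loop_continuous_along_paths[OF h1_adm h2_adm] closed_loop_lipschitz[OF h1_adm h2_adm])
  show ?thesis by (rule exists_unique_solution)
qed

end
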